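(* Consider the clustering defined in the context, for a graph $G=(V,E)$ with integer weights $w\colon E\to\{1,\dots,W\}$ and parameters $p\in(0,1)$, $r\in\mathbb{N}$. For every outcome of the sampled values, each cluster $U$ has strong diameter at most $2r$, i.e., $d_{G[U]}(x,y)\leq 2r$ for all $x,y\in U$.
   Context: Setting (the clustering): $G=(V,E)$ is a graph with integer edge weights $w\colon E\to\{1,\dots,W\}$, $d_G$ the weighted shortest-path distance, and each vertex has a distinct identifier $\mathrm{ID}(v)$. Let $p\in(0,1)$ and $r\in\mathbb{N}$. Let $\mathrm{GeomCap}(p,r)$ be the distribution on $\{0,\dots,r\}$ with $\Pr[=i]=p(1-p)^i$ for $0\leq i\leq r-1$ and $\Pr[=r]=(1-p)^r$. Each vertex $v$ independently samples $\delta_v\sim\mathrm{GeomCap}(p,r)$. For $u,x\in V$ define $d^{(u)}(s,x):=r-\delta_u+d_G(u,x)$ and the level $d_{G'}(s,x):=\min_{u\in V} d^{(u)}(s,x)$. The cluster center $c_x$ of $x$ is the vertex $u$ with smallest $\mathrm{ID}$ among those with $d^{(u)}(s,x)=d_{G'}(s,x)$; the cluster of a center $c$ is $\{x\in V: c_x=c\}$. For $U\subseteq V$, $G[U]$ is the induced subgraph with weighted distance $d_{G[U]}$. *)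

theory Defs
  imports Main "HOL-Library.Extended_Nat"
begin

text \<open>Undirected weighted graph: edges are 2-element vertex sets, weights w :: 'a set => nat.\<close>

definition walk_in :: "'a set set \<Rightarrow> 'a set \<Rightarrow> 'a list \<Rightarrow> bool" where
  "walk_in E U xs \<longleftrightarrow> xs \<noteq> [] \<and> set xs \<subseteq> U \<and>
     (\<forall>i < length xs - 1. {xs ! i, xs ! Suc i} \<in> E)"

definition walk_weight :: "('a set \<Rightarrow> nat) \<Rightarrow> 'a list \<Rightarrow> nat" where
  "walk_weight w xs = (\<Sum>i < length xs - 1. w {xs ! i, xs ! Suc i})"

text \<open>Weighted distance in the subgraph induced by U (infinity if no walk exists).
  d_G is wdist E w V.\<close>
definition wdist :: "'a set set \<Rightarrow> ('a set \<Rightarrow> nat) \<Rightarrow> 'a set \<Rightarrow> 'a \<Rightarrow> 'a \<Rightarrow> enat" where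
  "wdist E w U x y = (INF xs \<in> {xs. walk_in E U xs \<and> hd xs = x \<and> last xs = y}.
                        enat (walk_weight w xs))"

definition wgraph :: "'a set \<Rightarrow> 'a set set \<Rightarrow> ('a set \<Rightarrow> nat) \<Rightarrow> nat \<Rightarrow> bool" where
  "wgraph V E w W \<longleftrightarrow> finite V \<and> (\<forall>e\<in>E. e \<subseteq> V \<and> card e = 2 \<and> 1 \<le> w e \<and> w e \<le> W)"

definition dvia :: "'a set \<Rightarrow> 'a set set \<Rightarrow> ('a set \<Rightarrow> nat) \<Rightarrow> nat \<Rightarrow> ('a \<Rightarrow> nat) \<Rightarrow> 'a \<Rightarrow> 'a \<Rightarrow> enat" where
  "dvia V E w r \<delta> u x = enat (r - \<delta> u) + wdist E w V u x"

text \<open>level d_{G'}(s,x) = min over u in V\<close>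
definition level :: "'a set \<Rightarrow> 'a set set \<Rightarrow> ('a set \<Rightarrow> nat) \<Rightarrow> nat \<Rightarrow> ('a \<Rightarrow> nat) \<Rightarrow> 'a \<Rightarrow> enat" where
  "level V E w r \<delta> x = (INF u \<in> V. dvia V E w r \<delta> u x)"

definition center :: "'a set \<Rightarrow> 'a set set \<Rightarrow> ('a set \<Rightarrow> nat) \<Rightarrow> ('a \<Rightarrow> nat) \<Rightarrow> nat \<Rightarrow> ('a \<Rightarrow> nat) \<Rightarrow> 'a \<Rightarrow> 'a" where
  "center V E w ID r \<delta> x = (THE c. c \<in> V \<and> dvia V E w r \<delta> c x = level V E w r \<delta> x \<and>
      (\<forall>u\<in>V. dvia V E w r \<delta> u x = level V E w r \<delta> x \<longrightarrow> ID c \<le> ID u))"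

definition cluster :: "'a set \<Rightarrow> 'a set set \<Rightarrow> ('a set \<Rightarrow> nat) \<Rightarrow> ('a \<Rightarrow> nat) \<Rightarrow> nat \<Rightarrow> ('a \<Rightarrow> nat) \<Rightarrow> 'a \<Rightarrow> 'a set" where
  "cluster V E w ID r \<delta> c = {x \<in> V. center V E w ID r \<delta> x = c}"

end

theory Submission
  imports Defs
begin

(*
  The center c of x minimises r - \<delta>(u) + d(u, x) over all u, where d is the distance in G,
  and x itself is a candidate; hence r - \<delta>(c) + d(c, x) \<le> r - \<delta>(x) and d(c, x) \<le> r.
  Every vertex z on a shortest c-x path has center c as well: the triangle inequality gives
  r - \<delta>(u) + d(u, x) \<le> r - \<delta>(u) + d(u, z) + d(z, x), while for u = c this is an equality,
  so a vertex u beating c at z (or tying with it and having smaller ID) would beat c at x.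
  Such a path therefore lies in the cluster of c, and joining the paths from c to x and from c
  to y gives the bound 2r.
*)

lemma walk_in_singleton [simp]: "walk_in E U [a] \<longleftrightarrow> a \<in> U"
  by (simp add: walk_in_def)

lemma walk_weight_singleton [simp]: "walk_weight w [a] = 0"
  by (simp add: walk_weight_def)

lemma walk_in_Cons_Cons [simp]:
  "walk_in E U (a # b # xs) \<longleftrightarrow> a \<in> U \<and> {a, b} \<in> E \<and> walk_in E U (b # xs)"
  unfolding walk_in_def by (auto simp: All_less_Suc2)

lemma walk_weight_Cons_Cons [simp]:
  "walk_weight w (a # b # xs) = w {a, b} + walk_weight w (b # xs)"
  unfolding walk_weight_def by (simp del: sum.lessThan_Suc add: sum.lessThan_Suc_shift)

lemma walk_in_hd: "walk_in E U (a # xs) \<Longrightarrow> a \<in> U"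
  by (simp add: walk_in_def)

lemma walk_in_mono: "walk_in E U xs \<Longrightarrow> set xs \<subseteq> U' \<Longrightarrow> walk_in E U' xs"
  by (simp add: walk_in_def)

lemma walk_in_append:
  "xs \<noteq> [] \<Longrightarrow> walk_in E U (xs @ ys) \<longleftrightarrow> walk_in E U xs \<and> walk_in E U (last xs # ys)"
  by (induction xs rule: induct_list012) (auto simp: neq_Nil_conv dest: walk_in_hd)

lemma walk_weight_append:
  "xs \<noteq> [] \<Longrightarrow> walk_weight w (xs @ ys) = walk_weight w xs + walk_weight w (last xs # ys)"
  by (induction xs rule: induct_list012) (auto simp: neq_Nil_conv)

lemma walk_in_rev [simp]: "walk_in E U (rev xs) \<longleftrightarrow> walk_in E U xs"
proof (induction xs rule: induct_list012)
  case (3 a b zs)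
  have "walk_in E U (rev (a # b # zs)) \<longleftrightarrow> walk_in E U (rev (b # zs)) \<and> walk_in E U [b, a]"
    using walk_in_append[of "rev (b # zs)" E U "[a]"] by (simp add: last_rev)
  also have "\<dots> \<longleftrightarrow> walk_in E U (a # b # zs)"
    using "3.IH"(2) by (auto simp: insert_commute dest: walk_in_hd)
  finally show ?case .
qed auto

lemma walk_weight_rev [simp]: "walk_weight w (rev xs) = walk_weight w xs"
proof (induction xs rule: induct_list012)
  case (3 a b zs)
  have "walk_weight w (rev (a # b # zs)) = walk_weight w (rev (b # zs)) + walk_weight w [b, a]"
    using walk_weight_append[of "rev (b # zs)" w "[a]"] by (simp add: last_rev)
  with "3.IH"(2) show ?case by (simp add: insert_commute)
qed auto

lemma wdist_le_walk_weight:
  "walk_in E U xs \<Longrightarrow> hd xs = a \<Longrightarrow> last xs = b \<Longrightarrow> wdist E w U a b \<le> enat (walk_weight w xs)"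
  unfolding wdist_def by (rule INF_lower) auto

lemma wdist_self: "a \<in> U \<Longrightarrow> wdist E w U a a = 0"
  using wdist_le_walk_weight[of E U "[a]" a a w] by (simp add: enat_0)

lemma wdist_shortest_walk:
  assumes "wdist E w U a b \<noteq> \<infinity>"
  obtains xs where "walk_in E U xs" "hd xs = a" "last xs = b"
    "enat (walk_weight w xs) = wdist E w U a b"
proof -
  let ?S = "(\<lambda>xs. enat (walk_weight w xs)) ` {xs. walk_in E U xs \<and> hd xs = a \<and> last xs = b}"
  have "?S \<noteq> {}"
    using assms unfolding wdist_def by (metis Inf_empty top_enat_def)
  then have "Inf ?S \<in> ?S"
    unfolding Inf_enat_def by (metis (mono_tags) LeastI_ex ex_in_conv)
  then show thesis
    using that unfolding wdist_def by auto
qed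

lemma wdist_commute: "wdist E w U a b = wdist E w U b a"
proof -
  have "wdist E w U a b \<le> wdist E w U b a" for a b
    unfolding wdist_def[of E w U b a]
  proof (rule INF_greatest)
    fix xs assume "xs \<in> {xs. walk_in E U xs \<and> hd xs = b \<and> last xs = a}"
    then have "wdist E w U a b \<le> enat (walk_weight w (rev xs))"
      by (intro wdist_le_walk_weight) (auto simp: hd_rev last_rev)
    then show "wdist E w U a b \<le> enat (walk_weight w xs)"
      by simp
  qed
  then show ?thesis by (metis antisym)
qed

lemma wdist_triangle: "wdist E w U a b \<le> wdist E w U a m + wdist E w U m b"
proof (cases "wdist E w U a m = \<infinity> \<or> wdist E w U m b = \<infinity>")
  case False
  then obtain xs ys
    where xs: "walk_in E U xs" "hd xs = a" "last xs = m" "enat (walk_weight w xs) = wdist E w U a m"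
      and ys: "walk_in E U ys" "hd ys = m" "last ys = b" "enat (walk_weight w ys) = wdist E w U m b"
    by (metis wdist_shortest_walk)
  have "xs \<noteq> []" using xs(1) by (simp add: walk_in_def)
  obtain ys' where ys': "ys = m # ys'"
    using ys(1,2) by (cases ys) (auto simp: walk_in_def)
  have "walk_in E U (xs @ ys')" "walk_weight w (xs @ ys') = walk_weight w xs + walk_weight w ys"
    using walk_in_append walk_weight_append \<open>xs \<noteq> []\<close> xs ys ys' by auto
  moreover have "hd (xs @ ys') = a" "last (xs @ ys') = b"
    using \<open>xs \<noteq> []\<close> xs ys ys' by auto
  ultimately show ?thesis
    using wdist_le_walk_weight xs(4) ys(4) by (metis plus_enat_simps(1))
qed auto

lemma wdist_through_walk_vertex:
  assumes "walk_in E U xs" "hd xs = a" "last xs = b" "z \<in> set xs"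
  shows "wdist E w U a z + wdist E w U z b \<le> enat (walk_weight w xs)"
proof -
  obtain ys zs where split: "xs = (ys @ [z]) @ zs"
    using split_list[OF assms(4)] by auto
  have "walk_in E U (ys @ [z])" "walk_in E U (z # zs)"
    using walk_in_append[of "ys @ [z]" E U zs] assms(1) split by auto
  moreover have "hd (ys @ [z]) = a" "last (z # zs) = b"
    using assms(2,3) split by (cases ys; auto)+
  moreover have "walk_weight w xs = walk_weight w (ys @ [z]) + walk_weight w (z # zs)"
    using walk_weight_append[of "ys @ [z]" w zs] split by simp
  ultimately show ?thesis
    by (metis add_mono last_snoc list.sel(1) plus_enat_simps(1) wdist_le_walk_weight)
qed

definition is_center ::
    "'a set \<Rightarrow> 'a set set \<Rightarrow> ('a set \<Rightarrow> nat) \<Rightarrow> ('a \<Rightarrow> nat) \<Rightarrow> nat \<Rightarrow> ('a \<Rightarrow> nat) \<Rightarrow> 'a \<Rightarrow> 'a \<Rightarrow> bool"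
  where "is_center V E w ID r \<delta> x c \<longleftrightarrow> c \<in> V \<and> dvia V E w r \<delta> c x = level V E w r \<delta> x \<and>
      (\<forall>u\<in>V. dvia V E w r \<delta> u x = level V E w r \<delta> x \<longrightarrow> ID c \<le> ID u)"

lemma level_le_dvia: "u \<in> V \<Longrightarrow> level V E w r \<delta> x \<le> dvia V E w r \<delta> u x"
  unfolding level_def by (rule INF_lower)

lemma level_le_self: "x \<in> V \<Longrightarrow> level V E w r \<delta> x \<le> enat (r - \<delta> x)"
  using level_le_dvia[of x V E w r \<delta> x] by (simp add: dvia_def wdist_self)

lemma center_eqI:
  assumes "inj_on ID V" "is_center V E w ID r \<delta> x c"
  shows "center V E w ID r \<delta> x = c"
  unfolding center_def is_center_def[symmetric]
proof (rule the_equality)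
  fix c' assume "is_center V E w ID r \<delta> x c'"
  with assms(2) have "ID c' = ID c" "c' \<in> V" "c \<in> V"
    unfolding is_center_def by (auto intro: antisym)
  with assms(1) show "c' = c" by (meson inj_onD)
qed (fact assms(2))

lemma is_center_center:
  assumes "finite V" "x \<in> V" "inj_on ID V"
  shows "is_center V E w ID r \<delta> x (center V E w ID r \<delta> x)"
proof -
  let ?D = "\<lambda>u. dvia V E w r \<delta> u x"
  have fin: "finite (?D ` V)" "?D ` V \<noteq> {}"
    using assms(1,2) by auto
  have "level V E w r \<delta> x \<in> ?D ` V"
    unfolding level_def using cInf_eq_Min[OF fin] Min_in[OF fin] by simp
  then obtain u where "u \<in> V \<and> ?D u = level V E w r \<delta> x"
    by (auto simp: eq_commute)
  then obtain c where "c \<in> V \<and> ?D c = level V E w r \<delta> x"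
    "\<forall>u. u \<in> V \<and> ?D u = level V E w r \<delta> x \<longrightarrow> ID c \<le> ID u"
    using ex_has_least_nat[of "\<lambda>u. u \<in> V \<and> ?D u = level V E w r \<delta> x" u ID] by auto
  then have "is_center V E w ID r \<delta> x c"
    by (simp add: is_center_def)
  then show ?thesis using center_eqI assms(3) by metis
qed

lemma is_center_along_shortest_path:
  assumes c: "is_center V E w ID r \<delta> x c" and "x \<in> V" "z \<in> V"
    and on_path: "wdist E w V c z + wdist E w V z x \<le> wdist E w V c x"
  shows "is_center V E w ID r \<delta> z c"
proof -
  let ?d = "wdist E w V"
  let ?D = "\<lambda>u y. dvia V E w r \<delta> u y"
  let ?L = "level V E w r \<delta>"
  have detour: "?D u x \<le> ?D u z + ?d z x" for u
    using wdist_triangle[of E w V u x z] unfolding dvia_def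
    by (metis add.assoc add_left_mono)
  have via_c: "?D c z + ?d z x \<le> ?L x"
    using c on_path unfolding is_center_def dvia_def by (metis add.assoc add_left_mono)
  have "?d z x \<le> enat (r - \<delta> x)"
    using via_c level_le_self[OF \<open>x \<in> V\<close>, of E w r \<delta>]
    by (metis add.commute dual_order.trans le_iff_add)
  then have "?d z x \<noteq> \<infinity>" by (cases "?d z x") auto
  have c_min: "?D c z \<le> ?D u z" if "u \<in> V" for u
  proof (rule ccontr)
    assume "\<not> ?D c z \<le> ?D u z"
    with \<open>?d z x \<noteq> \<infinity>\<close> have "?D u z + ?d z x < ?D c z + ?d z x"
      by (simp add: add.commute)
    then have "?D u x < ?L x"
      using detour via_c by (meson order_le_less_trans order_less_le_trans)
    with level_le_dvia[OF that] show False by (simp add: not_le[symmetric])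
  qed
  have c_level: "?D c z = ?L z"
    using c_min c unfolding is_center_def level_def
    by (intro antisym INF_greatest INF_lower) auto
  have "ID c \<le> ID u" if "u \<in> V" "?D u z = ?L z" for u
  proof -
    have "?D u x \<le> ?L x"
      using detour[of u] via_c that(2) c_level by simp
    then have "?D u x = ?L x"
      using level_le_dvia[OF that(1)] by (rule antisym)
    with c that(1) show ?thesis by (simp add: is_center_def)
  qed
  with c c_level show ?thesis by (simp add: is_center_def)
qed

lemma wdist_center_le:
  assumes "is_center V E w ID r \<delta> x c" "x \<in> V"
  shows "wdist E w V c x \<le> enat r"
proof -
  have "enat (r - \<delta> c) + wdist E w V c x \<le> enat (r - \<delta> x)"
    using assms level_le_self unfolding is_center_def dvia_def by metis
  then show ?thesis
    by (cases "wdist E w V c x") auto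
qed

lemma wdist_cluster_center_le:
  assumes "finite V" "inj_on ID V" "x \<in> cluster V E w ID r \<delta> c"
  shows "wdist E w (cluster V E w ID r \<delta> c) c x \<le> enat r"
proof -
  let ?C = "cluster V E w ID r \<delta> c"
  have "x \<in> V" and c: "is_center V E w ID r \<delta> x c"
    using assms is_center_center unfolding cluster_def by fastforce+
  have "wdist E w V c x \<le> enat r"
    using wdist_center_le[OF c \<open>x \<in> V\<close>] .
  then obtain xs where xs: "walk_in E V xs" "hd xs = c" "last xs = x"
    "enat (walk_weight w xs) = wdist E w V c x"
    using wdist_shortest_walk by (metis infinity_ileE)
  have "z \<in> ?C" if "z \<in> set xs" for z
  proof -
    have "z \<in> V" using xs(1) that by (auto simp: walk_in_def)
    moreover have "is_center V E w ID r \<delta> z c"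
      using is_center_along_shortest_path[OF c \<open>x \<in> V\<close> \<open>z \<in> V\<close>]
        wdist_through_walk_vertex[OF xs(1-3) that, where w = w] xs(4) by simp
    ultimately show ?thesis
      using center_eqI[OF assms(2)] by (simp add: cluster_def)
  qed
  then have "wdist E w ?C c x \<le> enat (walk_weight w xs)"
    using walk_in_mono[OF xs(1)] xs(2,3) by (intro wdist_le_walk_weight) auto
  with xs(4) \<open>wdist E w V c x \<le> enat r\<close> show ?thesis by simp
qed

theorem corollary8:
  fixes V :: "'a set" and E :: "'a set set" and w :: "'a set \<Rightarrow> nat" and W :: nat
    and ID :: "'a \<Rightarrow> nat" and p :: real and r :: nat and \<delta> :: "'a \<Rightarrow> nat"
  assumes "wgraph V E w W"
    and "inj_on ID V"
    and "0 < p" and "p < 1"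
    and "\<forall>v\<in>V. \<delta> v \<le> r"
    and "c \<in> V" and "x \<in> cluster V E w ID r \<delta> c" and "y \<in> cluster V E w ID r \<delta> c"
  shows "wdist E w (cluster V E w ID r \<delta> c) x y \<le> enat (2 * r)"
proof -
  let ?C = "cluster V E w ID r \<delta> c"
  have "finite V" using assms(1) by (simp add: wgraph_def)
  have "wdist E w ?C x y \<le> wdist E w ?C c x + wdist E w ?C c y"
    using wdist_triangle[of E w ?C x y c] by (simp add: wdist_commute)
  also have "\<dots> \<le> enat r + enat r"
    using wdist_cluster_center_le[OF \<open>finite V\<close> assms(2)] assms(7,8) by (intro add_mono)
  finally show ?thesis by (simp add: mult_2)
qed

end
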